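(* Let $n,d,k\in\mathbb{N}$, $\lambda,z\ge1$, $\beta\in(0,1]$ and $\xi\ge1$ such that $n\ge m$, where $m=k\cdot\lfloor 1+40^{z/2}\cdot2\xi/k\rfloor$. Let $\mathsf{M}\colon(\mathcal{B}_d)^n\to(\mathcal{B}_d)^{k+1}$ be a $(\lambda,\xi,\beta)$-approximation algorithm for $(k+1,z)$-clustering. Let $\widetilde{\mathsf{M}}\colon\{-1,1\}^{m\times d}\to\{-1,1\}^d$ be the mechanism that on input $x_1,\dots,x_m\in\{-1,1\}^d$ computes $(c_1,\dots,c_{k+1})=\mathsf{M}\big(\tfrac1{\sqrt d}x_1,\dots,\tfrac1{\sqrt d}x_m,\vec0,\dots,\vec0\big)$ (with $n-m$ copies of the zero vector), samples $j$ uniformly from $[k+1]$, and outputs $\mathrm{sign}(c_j)$. Then $\widetilde{\mathsf{M}}$ is $\left(k,\ \alpha=\frac1{160\cdot(2\lambda)^{2/z}},\ \frac{\beta}{k+1}\right)$-weakly-accurate.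
   Context: $\mathcal{B}_d=\{x\in\mathbb{R}^d:\|x\|_2\le1\}$. For $S\in(\mathcal{B}_d)^n$ and $C=(c_1,\dots,c_K)$, $\mathrm{COST}_z(C;S)=\sum_{x\in S}\min_{i\in[K]}\|x-c_i\|_2^z$ and $\mathrm{OPT}_{K,z}(S)=\min_{C\in(\mathbb{R}^d)^K}\mathrm{COST}_z(C;S)$. $\mathsf{M}$ is a $(\lambda,\xi,\beta)$-approximation algorithm for $(K,z)$-clustering if for every $S$, $\Pr_{C\sim\mathsf{M}(S)}[\mathrm{COST}_z(C;S)\le\lambda\mathrm{OPT}_{K,z}(S)+\xi]\ge\beta$. $\mathrm{sign}(u)=1$ if $u\ge0$ and $-1$ otherwise, coordinatewise. For a matrix $Z\in\{-1,1\}^{m'\times d}$ and $b\in\{-1,1\}$, $\mathcal{J}_Z^b$ is the set of columns all of whose entries equal $b$; $q$ strongly-agrees with $Z$ if $|\{j\in\mathcal{J}_Z^b:q^j=b\}|\ge0.9|\mathcal{J}_Z^b|$ for both $b$. A mechanism on $\{-1,1\}^{m\times d}$ ($k\mid m$) is $(k,\alpha,\beta')$-weakly-accurate if for every $X=(x_1,\dots,x_m)$ such that for all $t\in[k]$ and $b$, $|\mathcal{J}^b_{X_t}|\ge\frac12(1-\alpha)d$ with $X_t=(x_{(t-1)m/k+1},\dots,x_{tm/k})$, the probability that its output strongly-agrees with some $X_t$ is at least $\beta'$. *)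

theory Defs
  imports "HOL-Probability.Probability"
begin

(* Points of R^d are vectors real^'d; d = CARD('d).
   A dataset S in (B_d)^n is a list of length n of points in cball 0 1.
   A tuple of K centers (c_1,...,c_K) is a function C :: nat => real^'d,
   where only C 0, ..., C (K-1) matter (index shift [K] ~ {0..<K}). *)

definition cost_z :: "nat \<Rightarrow> real \<Rightarrow> (nat \<Rightarrow> real^'d) \<Rightarrow> (real^'d) list \<Rightarrow> real" where
  "cost_z K z C S = (\<Sum>x\<leftarrow>S. Min ((\<lambda>i. norm (x - C i) powr z) ` {..<K}))"

definition opt_z :: "nat \<Rightarrow> real \<Rightarrow> (real^'d) list \<Rightarrow> real" where
  "opt_z K z S = (INF C \<in> (UNIV :: (nat \<Rightarrow> real^'d) set). cost_z K z C S)"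

definition in_ball_data :: "nat \<Rightarrow> (real^'d) list \<Rightarrow> bool" where
  "in_ball_data n S \<longleftrightarrow> length S = n \<and> set S \<subseteq> cball 0 1"

definition clustering_mechanism ::
  "nat \<Rightarrow> nat \<Rightarrow> ((real^'d) list \<Rightarrow> (nat \<Rightarrow> real^'d) measure) \<Rightarrow> bool" where
  "clustering_mechanism n K M \<longleftrightarrow>
     (\<forall>S. in_ball_data n S \<longrightarrow>
        prob_space (M S) \<and> sets (M S) = sets borel \<and>
        (AE C in M S. \<forall>i<K. C i \<in> cball 0 1))"

definition approx_alg ::
  "nat \<Rightarrow> nat \<Rightarrow> real \<Rightarrow> real \<Rightarrow> real \<Rightarrow> real \<Rightarrow>
   ((real^'d) list \<Rightarrow> (nat \<Rightarrow> real^'d) measure) \<Rightarrow> bool" where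
  "approx_alg n K z lam xi beta M \<longleftrightarrow>
     (\<forall>S. in_ball_data n S \<longrightarrow>
        measure (M S) {C. cost_z K z C S \<le> lam * opt_z K z S + xi} \<ge> beta)"

definition vsign :: "real^'d \<Rightarrow> real^'d" where
  "vsign u = (\<chi> i. if u $ i \<ge> 0 then 1 else -1)"

definition pm1_vec :: "real^'d \<Rightarrow> bool" where
  "pm1_vec x \<longleftrightarrow> (\<forall>i. x $ i = 1 \<or> x $ i = -1)"

(* columns of the matrix Z (rows = list elements) all of whose entries equal b *)
definition Jcols :: "(real^'d) list \<Rightarrow> real \<Rightarrow> 'd set" where
  "Jcols Z b = {j. \<forall>z\<in>set Z. z $ j = b}"

definition strongly_agrees :: "real^'d \<Rightarrow> (real^'d) list \<Rightarrow> bool" where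
  "strongly_agrees q Z \<longleftrightarrow>
     (\<forall>b\<in>{-1, 1::real}. real (card {j\<in>Jcols Z b. q $ j = b}) \<ge> 0.9 * real (card (Jcols Z b)))"

(* X_t for t in {0..<k} (index shift of [k]) *)
definition block :: "nat \<Rightarrow> nat \<Rightarrow> (real^'d) list \<Rightarrow> (real^'d) list" where
  "block k t X = take (length X div k) (drop (t * (length X div k)) X)"

definition weakly_accurate ::
  "nat \<Rightarrow> nat \<Rightarrow> real \<Rightarrow> real \<Rightarrow> ((real^'d) list \<Rightarrow> (real^'d) measure) \<Rightarrow> bool" where
  "weakly_accurate m k alpha beta' Mt \<longleftrightarrow>
     (\<forall>X. length X = m \<and> (\<forall>x\<in>set X. pm1_vec x) \<and>
        (\<forall>t<k. \<forall>b\<in>{-1, 1::real}.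
            real (card (Jcols (block k t X) b)) \<ge> 1/2 * (1 - alpha) * real CARD('d))
      \<longrightarrow> measure (Mt X) {q. \<exists>t<k. strongly_agrees q (block k t X)} \<ge> beta')"

definition tilde_mech ::
  "nat \<Rightarrow> nat \<Rightarrow> nat \<Rightarrow> ((real^'d) list \<Rightarrow> (nat \<Rightarrow> real^'d) measure) \<Rightarrow>
   (real^'d) list \<Rightarrow> (real^'d) measure" where
  "tilde_mech n m k M X =
     distr (M (map (\<lambda>x. (1 / sqrt (real CARD('d))) *\<^sub>R x) X @ replicate (n - m) 0)
              \<Otimes>\<^sub>M uniform_count_measure {0..k})
           borel (\<lambda>(C, j). vsign (C j))"

end

theory Submission
  imports Defs
begin

(* Scaled by 1/sqrt d, the +-1 rows lie on the unit sphere. If every block X_t has at least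
   (1 - alpha) d constant columns, two rows of the same block differ in at most alpha d
   coordinates, so one center on a row of each block plus one at the origin (for the zero
   padding) costs at most m (4 alpha)^(z/2). If instead the sign vector of no center strongly
   agrees with any block, each center has the wrong sign on a tenth of one constant-column class
   of the block of each row, i.e. on at least d/40 coordinates, so every solution costs at least
   m (1/40)^(z/2). The choice of alpha makes lambda m (4 alpha)^(z/2) half of m (1/40)^(z/2), and
   the choice of m makes m (1/40)^(z/2) exceed 2 xi; hence in every (lambda, xi)-approximate
   solution some center strongly agrees with some block, and the uniformly drawn index hits it
   with probability at least 1/(k+1). *)

lemma power2_norm_vec_eq_sum:
  fixes v :: "real^'d::finite"
  shows "(norm v)^2 = (\<Sum>i\<in>UNIV. (v $ i)^2)"
  by (simp add: norm_vec_def L2_set_def sum_nonneg)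

lemma powr_eq_power2_powr_half:
  fixes u z :: real
  assumes "u \<ge> 0"
  shows "u powr z = (u^2) powr (z / 2)"
proof (cases "u = 0")
  case False
  with assms have "u^2 = u powr 2" by (simp add: powr_realpow)
  then show ?thesis by (simp add: powr_powr)
qed simp

lemma vsign_nth_ne_imp_le_dist:
  fixes c :: "real^'d::finite" and s b :: real
  assumes "b \<in> {-1, 1}" and "vsign c $ j \<noteq> b" and "s \<ge> 0"
  shows "s^2 \<le> (s * b - c $ j)^2"
proof -
  from assms(1,2) have "b = 1 \<and> c $ j < 0 \<or> b = -1 \<and> c $ j \<ge> 0"
    by (auto simp: vsign_def split: if_splits)
  with assms(3) have "s \<le> \<bar>s * b - c $ j\<bar>" by auto
  with assms(3) show ?thesis by (metis power2_abs power_mono)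
qed

lemma not_strongly_agrees_imp_mismatches:
  assumes "\<not> strongly_agrees q Z"
  obtains b where "b \<in> {-1, 1}"
    and "0.1 * real (card (Jcols Z b)) \<le> real (card {j\<in>Jcols Z b. q $ j \<noteq> b})"
proof -
  from assms obtain b where b: "b \<in> {-1, 1}"
    and agree: "real (card {j\<in>Jcols Z b. q $ j = b}) < 0.9 * real (card (Jcols Z b))"
    unfolding strongly_agrees_def by force
  have "card (Jcols Z b) = card {j\<in>Jcols Z b. q $ j = b} + card {j\<in>Jcols Z b. q $ j \<noteq> b}"
    by (subst card_Un_disjoint[symmetric]) (auto intro: arg_cong[where f = card])
  with agree have "0.1 * real (card (Jcols Z b)) \<le> real (card {j\<in>Jcols Z b. q $ j \<noteq> b})"
    by simp
  with b show thesis by (rule that)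
qed

lemma mismatches_le_power2_norm:
  fixes x c :: "real^'d::finite" and s b :: real
  assumes "x \<in> set Z" and "b \<in> {-1, 1}" and "s \<ge> 0"
  shows "s^2 * real (card {j\<in>Jcols Z b. vsign c $ j \<noteq> b}) \<le> (norm (s *\<^sub>R x - c))^2"
proof -
  let ?D = "{j\<in>Jcols Z b. vsign c $ j \<noteq> b}"
  have "s^2 * real (card ?D) = (\<Sum>j\<in>?D. s^2)" by simp
  also have "\<dots> \<le> (\<Sum>j\<in>?D. (s * x $ j - c $ j)^2)"
  proof (rule sum_mono)
    fix j assume "j \<in> ?D"
    with assms(1) have "x $ j = b" and "vsign c $ j \<noteq> b" by (auto simp: Jcols_def)
    with assms(2,3) show "s^2 \<le> (s * x $ j - c $ j)^2" using vsign_nth_ne_imp_le_dist by metis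
  qed
  also have "\<dots> \<le> (\<Sum>j\<in>UNIV. (s * x $ j - c $ j)^2)" by (rule sum_mono2) auto
  also have "\<dots> = (norm (s *\<^sub>R x - c))^2" by (simp add: power2_norm_vec_eq_sum)
  finally show ?thesis .
qed

lemma power2_norm_diff_le_Jcols:
  fixes x y :: "real^'d::finite"
  assumes "x \<in> set Z" "y \<in> set Z" "pm1_vec x" "pm1_vec y"
  shows "(norm (x - y))^2
    \<le> 4 * (real CARD('d) - real (card (Jcols Z 1)) - real (card (Jcols Z (-1))))"
proof -
  let ?J = "Jcols Z 1 \<union> Jcols Z (-1)"
  have "Jcols Z 1 \<inter> Jcols Z (-1) = {}" using assms(1) by (force simp: Jcols_def)
  then have card_J: "card ?J = card (Jcols Z 1) + card (Jcols Z (-1))"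
    by (simp add: card_Un_disjoint)
  have same: "x $ i = y $ i" if "i \<in> ?J" for i
    using that assms(1,2) by (auto simp: Jcols_def)
  have "(norm (x - y))^2 = (\<Sum>i\<in>UNIV - ?J. (x $ i - y $ i)^2)"
    unfolding power2_norm_vec_eq_sum vector_minus_component
    by (rule sum.mono_neutral_right) (auto simp: same)
  also have "\<dots> \<le> (\<Sum>i\<in>UNIV - ?J. 4)"
  proof (rule sum_mono)
    fix i
    from assms(3,4) have "x $ i = 1 \<or> x $ i = -1" "y $ i = 1 \<or> y $ i = -1"
      by (auto simp: pm1_vec_def)
    then show "(x $ i - y $ i)^2 \<le> 4" by auto
  qed
  also have "\<dots> = 4 * (real CARD('d) - real (card ?J))"
    by (simp add: card_Diff_subset of_nat_diff[OF card_mono])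
  finally show ?thesis by (simp add: card_J)
qed

lemma cost_z_append: "cost_z K z C (xs @ ys) = cost_z K z C xs + cost_z K z C ys"
  by (simp add: cost_z_def)

lemma cost_z_nonneg: "K > 0 \<Longrightarrow> cost_z K z C S \<ge> 0"
  unfolding cost_z_def by (rule sum_list_nonneg) (auto intro!: Min.boundedI)

lemma opt_z_le_cost_z:
  assumes "K > 0"
  shows "opt_z K z S \<le> cost_z K z C S"
  unfolding opt_z_def
proof (rule cINF_lower)
  show "bdd_below ((\<lambda>C. cost_z K z C S) ` UNIV)"
    using cost_z_nonneg[OF assms] by (intro bdd_belowI2[where m = 0])
qed simp

lemma cost_z_le_if_near_center:
  assumes "\<And>x. x \<in> set S \<Longrightarrow> \<exists>i<K. (norm (x - C i))^2 \<le> r" and "z \<ge> 0"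
  shows "cost_z K z C S \<le> real (length S) * r powr (z / 2)"
proof -
  have "Min ((\<lambda>i. norm (x - C i) powr z) ` {..<K}) \<le> r powr (z / 2)" if "x \<in> set S" for x
  proof -
    from assms(1)[OF that] obtain i where "i < K" and near: "(norm (x - C i))^2 \<le> r" by blast
    then have "Min ((\<lambda>i. norm (x - C i) powr z) ` {..<K}) \<le> norm (x - C i) powr z"
      by (intro Min_le) auto
    also have "\<dots> = ((norm (x - C i))^2) powr (z / 2)" by (rule powr_eq_power2_powr_half) simp
    also have "\<dots> \<le> r powr (z / 2)" using near assms(2) by (intro powr_mono2) auto
    finally show ?thesis .
  qed
  then have "cost_z K z C S \<le> (\<Sum>x\<leftarrow>S. r powr (z / 2))"
    unfolding cost_z_def by (rule sum_list_mono)
  then show ?thesis by (simp add: sum_list_triv)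
qed

lemma cost_z_ge_if_far_from_centers:
  assumes "\<And>x i. x \<in> set S \<Longrightarrow> i < K \<Longrightarrow> r \<le> (norm (x - C i))^2"
    and "K > 0" and "r \<ge> 0" and "z \<ge> 0"
  shows "real (length S) * r powr (z / 2) \<le> cost_z K z C S"
proof -
  have "r powr (z / 2) \<le> Min ((\<lambda>i. norm (x - C i) powr z) ` {..<K})" if "x \<in> set S" for x
  proof (rule Min.boundedI)
    fix v assume "v \<in> (\<lambda>i. norm (x - C i) powr z) ` {..<K}"
    then obtain i where "i < K" and v: "v = norm (x - C i) powr z" by auto
    with assms that have "r powr (z / 2) \<le> ((norm (x - C i))^2) powr (z / 2)"
      by (intro powr_mono2) auto
    also have "\<dots> = v" unfolding v by (rule powr_eq_power2_powr_half[symmetric]) simp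
    finally show "r powr (z / 2) \<le> v" .
  qed (use assms(2) in auto)
  then have "(\<Sum>x\<leftarrow>S. r powr (z / 2)) \<le> cost_z K z C S"
    unfolding cost_z_def by (rule sum_list_mono)
  then show ?thesis by (simp add: sum_list_triv)
qed

lemma length_block:
  assumes "length X = k * L" and "t < k"
  shows "length (block k t X) = L"
proof -
  from assms(2) have "t * L + L \<le> k * L" by (metis Suc_leI add.commute mult_Suc mult_le_mono1)
  with assms show ?thesis by (cases "k = 0") (auto simp: block_def)
qed

lemma set_block_subset: "set (block k t X) \<subseteq> set X"
  unfolding block_def by (meson order.trans set_drop_subset set_take_subset)

lemma in_set_block:
  assumes "length X = k * L" and "x \<in> set X"
  obtains t where "t < k" and "x \<in> set (block k t X)"
proof -
  from assms obtain p where p: "p < k * L" "X ! p = x" by (auto simp: in_set_conv_nth)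
  then have "L > 0" by (cases L) auto
  define t where "t = p div L"
  define r where "r = p mod L"
  have "r < L" and p_eq: "p = t * L + r" using \<open>L > 0\<close> by (simp_all add: t_def r_def)
  have "t < k" unfolding t_def using p(1) by (simp add: less_mult_imp_div_less mult.commute)
  have "length X div k = L" using assms(1) \<open>t < k\<close> by simp
  moreover have "t * L \<le> length X" using \<open>t < k\<close> assms(1) by simp
  ultimately have "block k t X ! r = x" using \<open>r < L\<close> p(2) p_eq by (simp add: block_def)
  moreover have "r < length (block k t X)"
    using length_block[OF assms(1) \<open>t < k\<close>] \<open>r < L\<close> by simp
  ultimately show thesis using that \<open>t < k\<close> nth_mem by metis
qed

lemma vsign_borel_measurable: "(vsign :: real^'d::finite \<Rightarrow> real^'d) \<in> borel_measurable borel"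
proof (rule borel_measurable_euclidean_space[THEN iffD2], rule ballI)
  fix b :: "real^'d" assume "b \<in> Basis"
  then obtain i where b: "b = axis i 1" by (auto simp: Basis_vec_def)
  have "(\<lambda>x. vsign x \<bullet> b) = (\<lambda>x::real^'d. if 0 \<le> x $ i then 1 else -1)"
    by (auto simp: b inner_axis vsign_def)
  then show "(\<lambda>x. vsign x \<bullet> b) \<in> borel_measurable borel" by simp
qed

lemma pred_strongly_agrees [measurable]:
  "Measurable.pred borel (\<lambda>q::real^'d::finite. strongly_agrees q Z)"
proof -
  have count_eq: "real (card {j\<in>Jcols Z b. q $ j = b}) = (\<Sum>j\<in>Jcols Z b. of_bool (q $ j = b))"
    for q :: "real^'d" and b by (simp add: Int_def conj_commute)
  have "(\<lambda>q::real^'d. \<Sum>j\<in>J. of_bool (q $ j = b) :: real) \<in> borel_measurable borel" for J b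
    by measurable
  then show ?thesis unfolding strongly_agrees_def count_eq by measurable
qed

lemma measure_distr_uniform_index_ge:
  fixes N :: "(nat \<Rightarrow> 'a) measure" and f :: "'a \<Rightarrow> 'b"
  assumes "prob_space N"
    and coord: "\<And>i. (\<lambda>C. C i) \<in> N \<rightarrow>\<^sub>M M'" and f: "f \<in> M' \<rightarrow>\<^sub>M R"
    and A: "A \<in> sets R"
    and "0 < \<beta>" and "\<beta> \<le> measure N G"
    and hit: "\<And>C. C \<in> G \<Longrightarrow> \<exists>j\<le>k. f (C j) \<in> A"
  shows "\<beta> / real (k + 1)
    \<le> measure (distr (N \<Otimes>\<^sub>M uniform_count_measure {0..k}) R (\<lambda>(C, j). f (C j))) A"
proof -
  define U where "U = uniform_count_measure {0..k}"
  define P where "P = N \<Otimes>\<^sub>M U"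
  define F where "F = (\<lambda>(C, j::nat). f (C j))"
  define E where "E = F -` A \<inter> space P"
  interpret U: prob_space U unfolding U_def by (rule prob_space_uniform_count_measure) auto
  interpret P: prob_space P unfolding P_def using assms(1) U.prob_space_axioms by (rule prob_space_pair)
  interpret N: prob_space N by (fact assms(1))
  have space_U: "space U = {0..k}" by (simp add: U_def space_uniform_count_measure)
  have "F \<in> P \<rightarrow>\<^sub>M R"
  proof -
    have index: "snd \<in> P \<rightarrow>\<^sub>M count_space {0..k}"
      unfolding P_def U_def uniform_count_measure_def by simp
    have "(\<lambda>x. f (fst x i)) \<in> P \<rightarrow>\<^sub>M R" for i
      unfolding P_def using coord f by measurable
    from measurable_compose_countable'[OF this index] show ?thesis
      unfolding F_def split_beta by simp
  qed
  then have E: "E \<in> sets P" and distr_eq: "measure (distr P R F) A = P.prob E"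
    using A by (auto simp: E_def measure_distr)
  have "G \<in> sets N" using assms(5,6) measure_notin_sets[of G N] by force
  have "ennreal (1 / real (k + 1)) * indicator G C \<le> emeasure U (Pair C -` E)"
    if "C \<in> space N" for C
  proof (cases "C \<in> G")
    case True
    then obtain j where "j \<le> k" "f (C j) \<in> A" using hit by blast
    with that have "j \<in> Pair C -` E" by (auto simp: E_def F_def P_def space_pair_measure space_U)
    moreover have sub: "Pair C -` E \<subseteq> {0..k}" by (auto simp: E_def P_def space_pair_measure space_U)
    ultimately have "1 \<le> card (Pair C -` E)"
      by (metis One_nat_def Suc_leI card_gt_0_iff empty_iff finite_atLeastAtMost finite_subset)
    then have "1 / real (k + 1) \<le> real (card (Pair C -` E)) / real (k + 1)"
      by (simp add: divide_right_mono)
    with True sub show ?thesis by (simp add: U_def emeasure_uniform_count_measure ennreal_leI)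
  qed simp
  then have "(\<integral>\<^sup>+C. ennreal (1 / real (k + 1)) * indicator G C \<partial>N)
      \<le> (\<integral>\<^sup>+C. emeasure U (Pair C -` E) \<partial>N)"
    by (rule nn_integral_mono)
  also have "\<dots> = emeasure P E"
    using U.emeasure_pair_measure_alt[of E N] E by (simp add: P_def)
  finally have "ennreal (1 / real (k + 1)) * ennreal (N.prob G) \<le> ennreal (P.prob E)"
    using \<open>G \<in> sets N\<close>
    by (simp add: nn_integral_cmult_indicator N.emeasure_eq_measure P.emeasure_eq_measure)
  then have "1 / real (k + 1) * N.prob G \<le> P.prob E"
    by (simp add: ennreal_mult[symmetric])
  moreover have "\<beta> / real (k + 1) \<le> 1 / real (k + 1) * N.prob G"
    using assms(6) by (simp add: divide_right_mono)
  ultimately show ?thesis using distr_eq by (simp add: P_def U_def F_def)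
qed

definition embed_padded :: "nat \<Rightarrow> (real^'d::finite) list \<Rightarrow> (real^'d) list" where
  "embed_padded r X = map (\<lambda>x. (1 / sqrt (real CARD('d))) *\<^sub>R x) X @ replicate r 0"

lemma norm_pm1_vec:
  fixes x :: "real^'d::finite"
  assumes "pm1_vec x"
  shows "norm x = sqrt (real CARD('d))"
proof -
  have "(x $ i)^2 = 1" for i using assms by (cases "x $ i = 1") (auto simp: pm1_vec_def)
  then have "(norm x)^2 = real CARD('d)" by (simp add: power2_norm_vec_eq_sum)
  then show ?thesis by (simp add: real_sqrt_unique)
qed

lemma in_ball_data_embed_padded:
  fixes X :: "(real^'d::finite) list"
  assumes "length X = m" and "m \<le> n" and "\<And>x. x \<in> set X \<Longrightarrow> pm1_vec x"
  shows "in_ball_data n (embed_padded (n - m) X)"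
  using assms by (auto simp: in_ball_data_def embed_padded_def norm_pm1_vec)

lemma power2_norm_scaled_diff_le:
  fixes x y :: "real^'d::finite"
  defines "s \<equiv> 1 / sqrt (real CARD('d))"
  assumes "x \<in> set Z" "y \<in> set Z" "pm1_vec x" "pm1_vec y"
    and wide: "(1 - \<alpha>) * real CARD('d) \<le> real (card (Jcols Z 1)) + real (card (Jcols Z (-1)))"
  shows "(norm (s *\<^sub>R x - s *\<^sub>R y))^2 \<le> 4 * \<alpha>"
proof -
  have "(norm (s *\<^sub>R x - s *\<^sub>R y))^2 = (norm (x - y))^2 / real CARD('d)"
    by (simp add: s_def power_mult_distrib power_divide flip: scaleR_diff_right)
  also have "\<dots> \<le> 4 * (real CARD('d) - real (card (Jcols Z 1)) - real (card (Jcols Z (-1))))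
      / real CARD('d)"
    using power2_norm_diff_le_Jcols[OF assms(2-5)] by (simp add: divide_right_mono)
  also have "\<dots> \<le> 4 * \<alpha>"
    using wide by (simp add: divide_le_eq algebra_simps)
  finally show ?thesis .
qed

lemma power2_norm_scaled_minus_disagreeing_ge:
  fixes x c :: "real^'d::finite"
  defines "s \<equiv> 1 / sqrt (real CARD('d))"
  assumes "x \<in> set Z" and "\<not> strongly_agrees (vsign c) Z"
    and wide: "\<And>b. b \<in> {-1, 1} \<Longrightarrow>
      1/2 * (1 - \<alpha>) * real CARD('d) \<le> real (card (Jcols Z b))"
    and "\<alpha> \<le> 1/2"
  shows "1/40 \<le> (norm (s *\<^sub>R x - c))^2"
proof -
  obtain b where b: "b \<in> {-1, 1}"
    and mism: "0.1 * real (card (Jcols Z b)) \<le> real (card {j\<in>Jcols Z b. vsign c $ j \<noteq> b})"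
    using not_strongly_agrees_imp_mismatches[OF assms(3)] .
  have "real CARD('d) / 40 \<le> 0.1 * (1/2 * (1 - \<alpha>) * real CARD('d))"
    using \<open>\<alpha> \<le> 1/2\<close> by simp
  also have "\<dots> \<le> real (card {j\<in>Jcols Z b. vsign c $ j \<noteq> b})"
    using wide[OF b] mism by linarith
  finally have "1/40 \<le> s^2 * real (card {j\<in>Jcols Z b. vsign c $ j \<noteq> b})"
    by (simp add: s_def field_simps)
  also have "\<dots> \<le> (norm (s *\<^sub>R x - c))^2"
    using assms(2) b by (rule mismatches_le_power2_norm) (simp add: s_def)
  finally show ?thesis .
qed

lemma opt_z_embed_padded_le:
  fixes X :: "(real^'d::finite) list"
  assumes "length X = k * L" and "L > 0" and pm1: "\<And>x. x \<in> set X \<Longrightarrow> pm1_vec x"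
    and wide: "\<And>t. t < k \<Longrightarrow> (1 - \<alpha>) * real CARD('d)
      \<le> real (card (Jcols (block k t X) 1)) + real (card (Jcols (block k t X) (-1)))"
    and "z \<ge> 0"
  shows "opt_z (k + 1) z (embed_padded r X) \<le> real (length X) * (4 * \<alpha>) powr (z / 2)"
proof -
  define s where "s = 1 / sqrt (real CARD('d))"
  define C where "C = (\<lambda>i. if i < k then s *\<^sub>R hd (block k i X) else 0)"
  have near: "\<exists>i<k + 1. (norm (y - C i))^2 \<le> 4 * \<alpha>" if "y \<in> set (map ((*\<^sub>R) s) X)" for y
  proof -
    from that obtain x where "x \<in> set X" and y: "y = s *\<^sub>R x" by auto
    then obtain t where "t < k" and x: "x \<in> set (block k t X)"
      using in_set_block[OF assms(1)] by blast
    have "block k t X \<noteq> []" using length_block[OF assms(1) \<open>t < k\<close>] \<open>L > 0\<close> by auto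
    then have hd: "hd (block k t X) \<in> set (block k t X)" by simp
    have "(norm (y - C t))^2 \<le> 4 * \<alpha>"
      unfolding y C_def s_def using \<open>t < k\<close> x hd set_block_subset
      by (auto intro!: power2_norm_scaled_diff_le pm1 wide)
    moreover have "t < k + 1" using \<open>t < k\<close> by simp
    ultimately show ?thesis by blast
  qed
  have "cost_z (k + 1) z C (map ((*\<^sub>R) s) X) \<le> real (length X) * (4 * \<alpha>) powr (z / 2)"
    using cost_z_le_if_near_center[of "map ((*\<^sub>R) s) X", OF near \<open>z \<ge> 0\<close>] by simp
  moreover have "cost_z (k + 1) z C (replicate r 0) \<le> 0"
  proof -
    have "\<exists>i<k + 1. (norm (y - C i))^2 \<le> 0" if "y \<in> set (replicate r 0)" for y
      using that by (intro exI[of _ k]) (auto simp: C_def)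
    from cost_z_le_if_near_center[of "replicate r 0", OF this \<open>z \<ge> 0\<close>] show ?thesis by simp
  qed
  ultimately have "cost_z (k + 1) z C (embed_padded r X) \<le> real (length X) * (4 * \<alpha>) powr (z / 2)"
    by (simp add: embed_padded_def cost_z_append s_def)
  moreover have "opt_z (k + 1) z (embed_padded r X) \<le> cost_z (k + 1) z C (embed_padded r X)"
    by (rule opt_z_le_cost_z) simp
  ultimately show ?thesis by linarith
qed

lemma cost_z_embed_padded_ge:
  fixes X :: "(real^'d::finite) list"
  assumes "length X = k * L"
    and wide: "\<And>t b. t < k \<Longrightarrow> b \<in> {-1, 1} \<Longrightarrow>
      1/2 * (1 - \<alpha>) * real CARD('d) \<le> real (card (Jcols (block k t X) b))"
    and "\<alpha> \<le> 1/2" and "z \<ge> 0"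
    and disagree: "\<And>i t. i \<le> k \<Longrightarrow> t < k \<Longrightarrow>
      \<not> strongly_agrees (vsign (C i)) (block k t X)"
  shows "real (length X) * (1/40) powr (z / 2) \<le> cost_z (k + 1) z C (embed_padded r X)"
proof -
  define s where "s = 1 / sqrt (real CARD('d))"
  have "1/40 \<le> (norm (y - C i))^2" if "y \<in> set (map ((*\<^sub>R) s) X)" and "i < k + 1" for y i
  proof -
    from that obtain x where "x \<in> set X" and y: "y = s *\<^sub>R x" by auto
    then obtain t where "t < k" and x: "x \<in> set (block k t X)"
      using in_set_block[OF assms(1)] by blast
    have "\<not> strongly_agrees (vsign (C i)) (block k t X)" using disagree that(2) \<open>t < k\<close> by simp
    from power2_norm_scaled_minus_disagreeing_ge[OF x this wide[OF \<open>t < k\<close>] \<open>\<alpha> \<le> 1/2\<close>]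
    show ?thesis unfolding y s_def .
  qed
  then have "real (length X) * (1/40) powr (z / 2) \<le> cost_z (k + 1) z C (map ((*\<^sub>R) s) X)"
    using cost_z_ge_if_far_from_centers[of "map ((*\<^sub>R) s) X" "k + 1" "1/40" C z] \<open>z \<ge> 0\<close>
    by simp
  then show ?thesis
    using cost_z_nonneg[of "k + 1" z C "replicate r 0"]
    by (simp add: embed_padded_def cost_z_append s_def)
qed

lemma lam_mult_powr_alpha:
  fixes lam z :: real
  assumes "lam > 0" and "z > 0"
  shows "lam * (4 * (1 / (160 * (2 * lam) powr (2 / z)))) powr (z / 2) = (1/40) powr (z / 2) / 2"
proof -
  have "(4 * (1 / (160 * (2 * lam) powr (2 / z)))) powr (z / 2)
      = (1/40) powr (z / 2) / ((2 * lam) powr (2 / z)) powr (z / 2)"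
    using assms by (simp add: powr_divide powr_mult)
  also have "((2 * lam) powr (2 / z)) powr (z / 2) = 2 * lam"
    using assms by (simp add: powr_powr)
  finally show ?thesis using assms by simp
qed

lemma nat_floor_one_plus_div:
  fixes y :: real
  assumes "k > 0" and "y \<ge> 0"
  shows "0 < nat \<lfloor>1 + y / real k\<rfloor>" and "y < real k * real (nat \<lfloor>1 + y / real k\<rfloor>)"
proof -
  have "y / real k < real (nat \<lfloor>1 + y / real k\<rfloor>)" using assms by linarith
  then show "y < real k * real (nat \<lfloor>1 + y / real k\<rfloor>)"
    using assms(1) by (simp add: divide_less_eq mult.commute)
  with assms(2) have "0 < real k * real (nat \<lfloor>1 + y / real k\<rfloor>)" by linarith
  then show "0 < nat \<lfloor>1 + y / real k\<rfloor>" by (simp add: zero_less_mult_iff)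
qed

lemma approx_solution_agrees_with_block:
  fixes X :: "(real^'d::finite) list" and lam z xi :: real
  defines "\<alpha> \<equiv> 1 / (160 * (2 * lam) powr (2 / z))"
  assumes "length X = k * L" and "L > 0" and "\<And>x. x \<in> set X \<Longrightarrow> pm1_vec x"
    and wide: "\<And>t b. t < k \<Longrightarrow> b \<in> {-1, 1} \<Longrightarrow>
      1/2 * (1 - \<alpha>) * real CARD('d) \<le> real (card (Jcols (block k t X) b))"
    and "lam \<ge> 1" and "z \<ge> 1"
    and margin: "2 * xi < real (length X) * (1/40) powr (z / 2)"
    and approx: "cost_z (k + 1) z C (embed_padded r X) \<le> lam * opt_z (k + 1) z (embed_padded r X) + xi"
  shows "\<exists>i\<le>k. \<exists>t<k. strongly_agrees (vsign (C i)) (block k t X)"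
proof (rule ccontr)
  assume disagree: "\<not> ?thesis"
  have "1 \<le> (2 * lam) powr (2 / z)" using assms(6,7) by (intro ge_one_powr_ge_zero) auto
  then have "\<alpha> \<le> 1/2" unfolding \<alpha>_def by (simp add: divide_le_eq)
  have "(1 - \<alpha>) * real CARD('d)
      \<le> real (card (Jcols (block k t X) 1)) + real (card (Jcols (block k t X) (-1)))"
    if "t < k" for t
    using wide[OF that, of 1] wide[OF that, of "-1"] by simp
  then have "lam * opt_z (k + 1) z (embed_padded r X) \<le> lam * (real (length X) * (4 * \<alpha>) powr (z / 2))"
    using assms(2-4,6,7) by (intro mult_left_mono opt_z_embed_padded_le) auto
  also have "\<dots> = real (length X) * (1/40) powr (z / 2) / 2"
    using lam_mult_powr_alpha[of lam z] assms(6,7) by (simp add: \<alpha>_def)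
  finally have "lam * opt_z (k + 1) z (embed_padded r X) \<le> real (length X) * (1/40) powr (z / 2) / 2" .
  moreover have "real (length X) * (1/40) powr (z / 2) \<le> cost_z (k + 1) z C (embed_padded r X)"
    using assms(2,7) wide \<open>\<alpha> \<le> 1/2\<close> disagree by (intro cost_z_embed_padded_ge) auto
  ultimately show False using approx margin by linarith
qed

lemma tilde_mech_strongly_agrees_ge:
  fixes M :: "(real^'d::finite) list \<Rightarrow> (nat \<Rightarrow> real^'d) measure" and lam z beta xi :: real
  assumes "length X = m" and "m = k * L" and "L > 0" and "m \<le> n"
    and pm1: "\<forall>x\<in>set X. pm1_vec x"
    and wide: "\<forall>t<k. \<forall>b\<in>{-1, 1::real}. 1/2 * (1 - 1 / (160 * (2 * lam) powr (2 / z)))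
      * real CARD('d) \<le> real (card (Jcols (block k t X) b))"
    and "lam \<ge> 1" and "z \<ge> 1" and "0 < beta"
    and margin: "2 * xi < real m * (1/40) powr (z / 2)"
    and "clustering_mechanism n (k + 1) M" and "approx_alg n (k + 1) z lam xi beta M"
  shows "beta / real (k + 1)
    \<le> measure (tilde_mech n m k M X) {q. \<exists>t<k. strongly_agrees q (block k t X)}"
proof -
  define S where "S = embed_padded (n - m) X"
  define G where "G = {C. cost_z (k + 1) z C S \<le> lam * opt_z (k + 1) z S + xi}"
  have "in_ball_data n S"
    unfolding S_def using assms(1,4) pm1 by (intro in_ball_data_embed_padded) auto
  then have "prob_space (M S)" and sets: "sets (M S) = sets borel" and "beta \<le> measure (M S) G"
    using assms(11,12) by (auto simp: clustering_mechanism_def approx_alg_def G_def)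
  moreover have "(\<lambda>C. C i) \<in> M S \<rightarrow>\<^sub>M borel" for i
    by (simp add: measurable_cong_sets[OF sets refl] measurable_product_coordinates)
  moreover have "\<exists>j\<le>k. vsign (C j) \<in> {q. \<exists>t<k. strongly_agrees q (block k t X)}"
    if "C \<in> G" for C
    using approx_solution_agrees_with_block[OF _ \<open>L > 0\<close> pm1[rule_format] wide[rule_format]
        assms(7,8) margin[folded assms(1)] that[unfolded G_def S_def mem_Collect_eq]] assms(1,2)
    by simp
  ultimately show ?thesis
    unfolding tilde_mech_def S_def[unfolded embed_padded_def, symmetric]
    using assms(9) by (intro measure_distr_uniform_index_ge) (auto intro: vsign_borel_measurable)
qed

theorem claim7p6:
  fixes n k m :: nat and lam z beta xi :: real
    and M :: "(real^'d::finite) list \<Rightarrow> (nat \<Rightarrow> real^'d) measure"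
  assumes "k \<ge> 1"
    and "lam \<ge> 1" and "z \<ge> 1" and "0 < beta" and "beta \<le> 1" and "xi \<ge> 1"
    and "m = k * nat \<lfloor>1 + 40 powr (z / 2) * 2 * xi / real k\<rfloor>"
    and "n \<ge> m"
    and "clustering_mechanism n (k + 1) M"
    and "approx_alg n (k + 1) z lam xi beta M"
  shows "weakly_accurate m k (1 / (160 * (2 * lam) powr (2 / z))) (beta / real (k + 1))
           (tilde_mech n m k M)"
proof -
  define L where "L = nat \<lfloor>1 + 40 powr (z / 2) * 2 * xi / real k\<rfloor>"
  have "m = k * L" and "0 < L" and "40 powr (z / 2) * 2 * xi < real k * real L"
    using assms(1,6,7) nat_floor_one_plus_div[of k "40 powr (z / 2) * 2 * xi"]
    by (simp_all add: L_def)
  then have "2 * xi < real m * (1/40) powr (z / 2)"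
    by (simp add: powr_divide field_simps)
  with \<open>m = k * L\<close> \<open>0 < L\<close> show ?thesis
    unfolding weakly_accurate_def using assms(2-4,8-10)
    by (blast intro: tilde_mech_strongly_agrees_ge)
qed

end
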